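(* Let $\Delta$ be a complete unimodular fan in $N_\mathbb R$, $\Sigma$ a tropical cycle in $N_\mathbb R$ compatible with $\Delta$, and $\tau\in\Delta$. Then $\rho(\overline\Sigma\cap O(\tau))=\overline{\rho(\Sigma)}\cap O(\tau)$ as tropical cycles in $O(\tau)$.
   Context: $N_\mathbb R(\Delta)=\bigsqcup_{\tau\in\Delta}O(\tau)$, $O(\tau)=N_\mathbb R/\mathbb R\tau$, closures taken in $N_\mathbb R(\Delta)$; for $\Sigma$ compatible with $\Delta$ (for each polyhedron $P$ of $\Sigma$ and $\sigma\in\Delta$, either $\sigma\subseteq\rho(P)$ or $\mathrm{relint}(\sigma)\cap\rho(P)=\emptyset$, $\rho$ = recession cone), $\overline\Sigma\cap O(\tau)=\bigcup_{\tau\subseteq\rho(\sigma)}\pi_\tau(\sigma)$ is a tropical cycle with the weights of the corresponding faces of $\Sigma$. The recession fan $\rho(\Sigma)$ of a tropical cycle $\Sigma$ (with a polyhedral structure such that each $\rho(\sigma)$ is a cone of a fan) is the fan of the cones $\rho(\sigma)$, where a maximal cone $\tau'$ gets weight $m(\tau')=\sum_{\sigma\in\Sigma,\rho(\sigma)=\tau'}m(\sigma)$; this is a balanced fan. *)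

theory Defs
  imports "HOL-Analysis.Analysis"
begin

text \<open>Ambient space N_R = real^'n, lattice N = integer vectors.\<close>

definition lat_vec :: "real^'n \<Rightarrow> bool" where
  "lat_vec v \<longleftrightarrow> (\<forall>i. v $ i \<in> \<int>)"

definition rat_polyhedron :: "(real^'n) set \<Rightarrow> bool" where
  "rat_polyhedron P \<longleftrightarrow>
     (\<exists>F :: ((real^'n) \<times> real) set. finite F \<and> (\<forall>(a,b)\<in>F. lat_vec a) \<and>
        P = {x. \<forall>(a,b)\<in>F. a \<bullet> x \<le> b})"

definition rec_cone :: "(real^'n) set \<Rightarrow> (real^'n) set" where
  "rec_cone P = {d. \<forall>x\<in>P. \<forall>t::real. t \<ge> 0 \<longrightarrow> x + t *\<^sub>R d \<in> P}"

definition pos_hull :: "(real^'n) set \<Rightarrow> (real^'n) set" where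
  "pos_hull B = {\<Sum>b\<in>B. c b *\<^sub>R b | c. \<forall>b\<in>B. c b \<ge> 0}"

definition int_span :: "(real^'n) set \<Rightarrow> (real^'n) set" where
  "int_span B = {\<Sum>b\<in>B. of_int (c b) *\<^sub>R b | c. True}"

text \<open>A unimodular cone: generated by part of a lattice basis (linearly independent
  lattice vectors spanning a saturated sublattice).\<close>
definition unimodular_cone :: "(real^'n) set \<Rightarrow> bool" where
  "unimodular_cone \<sigma> \<longleftrightarrow>
     (\<exists>B. finite B \<and> independent B \<and> (\<forall>b\<in>B. lat_vec b) \<and> \<sigma> = pos_hull B \<and>
          (\<forall>v. lat_vec v \<and> v \<in> span B \<longrightarrow> v \<in> int_span B))"

definition is_fan :: "(real^'n) set set \<Rightarrow> bool" where
  "is_fan \<Delta> \<longleftrightarrow> finite \<Delta> \<and> \<Delta> \<noteq> {} \<and>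
     (\<forall>\<sigma>\<in>\<Delta>. rat_polyhedron \<sigma> \<and> cone \<sigma> \<and> \<sigma> \<noteq> {} \<and> \<sigma> \<inter> uminus ` \<sigma> = {0}) \<and>
     (\<forall>\<sigma>\<in>\<Delta>. \<forall>F. F face_of \<sigma> \<and> F \<noteq> {} \<longrightarrow> F \<in> \<Delta>) \<and>
     (\<forall>\<sigma>\<in>\<Delta>. \<forall>\<sigma>'\<in>\<Delta>. (\<sigma> \<inter> \<sigma>') face_of \<sigma>)"

definition complete_unimodular_fan :: "(real^'n) set set \<Rightarrow> bool" where
  "complete_unimodular_fan \<Delta> \<longleftrightarrow> is_fan \<Delta> \<and> \<Union>\<Delta> = UNIV \<and> (\<forall>\<sigma>\<in>\<Delta>. unimodular_cone \<sigma>)"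

definition polyhedral_complex :: "(real^'n) set set \<Rightarrow> bool" where
  "polyhedral_complex S \<longleftrightarrow> finite S \<and> (\<forall>P\<in>S. rat_polyhedron P \<and> P \<noteq> {}) \<and>
     (\<forall>P\<in>S. \<forall>F. F face_of P \<and> F \<noteq> {} \<longrightarrow> F \<in> S) \<and>
     (\<forall>P\<in>S. \<forall>Q\<in>S. P \<inter> Q \<noteq> {} \<longrightarrow> (P \<inter> Q) face_of P)"

definition lin_space :: "(real^'n) set \<Rightarrow> (real^'n) set" where
  "lin_space P = span {x - y | x y. x \<in> P \<and> y \<in> P}"

text \<open>u is a lattice normal vector of the facet \<nu> of \<sigma>: it is a lattice vector in the
  linear space of \<sigma> whose class generates (L_\<sigma> \<inter> N)/(L_\<nu> \<inter> N), pointing into \<sigma>.\<close>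
definition lattice_normal :: "(real^'n) set \<Rightarrow> (real^'n) set \<Rightarrow> real^'n \<Rightarrow> bool" where
  "lattice_normal \<sigma> \<nu> u \<longleftrightarrow> lat_vec u \<and> u \<in> lin_space \<sigma> \<and>
     (\<forall>v. lat_vec v \<and> v \<in> lin_space \<sigma> \<longrightarrow>
        (\<exists>c::int. \<exists>w. lat_vec w \<and> w \<in> lin_space \<nu> \<and> v = of_int c *\<^sub>R u + w)) \<and>
     (\<exists>x\<in>\<nu>. \<exists>e>0. x + e *\<^sub>R u \<in> \<sigma>)"

definition balanced :: "(real^'n) set set \<Rightarrow> ((real^'n) set \<Rightarrow> int) \<Rightarrow> nat \<Rightarrow> bool" where
  "balanced S m k \<longleftrightarrow>
     (\<forall>\<nu>\<in>S. aff_dim \<nu> = int k - 1 \<longrightarrow>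
        (\<exists>u. (\<forall>\<sigma>\<in>S. aff_dim \<sigma> = int k \<and> \<nu> \<subseteq> \<sigma> \<longrightarrow> lattice_normal \<sigma> \<nu> (u \<sigma>)) \<and>
             (\<Sum>\<sigma>\<in>{\<sigma>\<in>S. aff_dim \<sigma> = int k \<and> \<nu> \<subseteq> \<sigma>}. of_int (m \<sigma>) *\<^sub>R u \<sigma>) \<in> lin_space \<nu>))"

definition tropical_cycle :: "(real^'n) set set \<Rightarrow> ((real^'n) set \<Rightarrow> int) \<Rightarrow> nat \<Rightarrow> bool" where
  "tropical_cycle S m k \<longleftrightarrow> polyhedral_complex S \<and>
     (\<forall>P\<in>S. \<exists>Q\<in>S. P \<subseteq> Q \<and> aff_dim Q = int k) \<and> balanced S m k"

definition compatible :: "(real^'n) set set \<Rightarrow> (real^'n) set set \<Rightarrow> bool" where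
  "compatible \<Delta> S \<longleftrightarrow>
     (\<forall>P\<in>S. \<forall>\<sigma>\<in>\<Delta>. \<sigma> \<subseteq> rec_cone P \<or> rel_interior \<sigma> \<inter> rec_cone P = {})"

text \<open>A weighted family is a finitely supported function from polyhedra to weights.
  Cycles in O(\<tau>) = N_R / span \<tau> are represented by pulling back along the projection
  \<pi>_\<tau>: a polyhedron Q in O(\<tau>) is represented by \<pi>_\<tau>^{-1}(Q); dimensions shift by dim \<tau>.\<close>

definition cycle_wt :: "(real^'n) set set \<Rightarrow> ((real^'n) set \<Rightarrow> int) \<Rightarrow> nat \<Rightarrow> (real^'n) set \<Rightarrow> int" where
  "cycle_wt S m k P = (if P \<in> S \<and> aff_dim P = int k then m P else 0)"

text \<open>Preimage of \<pi>_\<tau>(P) under \<pi>_\<tau>.\<close>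
definition lift :: "(real^'n) set \<Rightarrow> (real^'n) set \<Rightarrow> (real^'n) set" where
  "lift \<tau> P = {x + v | x v. x \<in> P \<and> v \<in> span \<tau>}"

text \<open>Closure of a weighted family intersected with O(\<tau>):
  cells \<pi>_\<tau>(P) for \<tau> \<subseteq> \<rho>(P), with the weight of P.\<close>
definition orbit_part :: "(real^'n) set \<Rightarrow> ((real^'n) set \<Rightarrow> int) \<Rightarrow> (real^'n) set \<Rightarrow> int" where
  "orbit_part \<tau> W Q = (\<Sum>P\<in>{P. W P \<noteq> 0 \<and> \<tau> \<subseteq> rec_cone P \<and> lift \<tau> P = Q}. W P)"

text \<open>Recession fan of a weighted k-dimensional family: cone C of dimension k gets the
  sum of the weights of the cells P with \<rho>(P) = C.\<close>
definition rec_part :: "nat \<Rightarrow> ((real^'n) set \<Rightarrow> int) \<Rightarrow> (real^'n) set \<Rightarrow> int" where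
  "rec_part k W C = (\<Sum>P\<in>{P. W P \<noteq> 0 \<and> rec_cone P = C \<and> aff_dim C = int k}. W P)"

definition weight_fn :: "nat \<Rightarrow> ((real^'n) set \<Rightarrow> int) \<Rightarrow> real^'n \<Rightarrow> int" where
  "weight_fn k W x = (\<Sum>P\<in>{P. W P \<noteq> 0 \<and> aff_dim P = int k \<and> x \<in> rel_interior P}. W P)"

text \<open>Equality of k-cycles (up to refinement): the weight functions agree outside a finite
  union of polyhedra of dimension < k.\<close>
definition cycle_eq :: "nat \<Rightarrow> ((real^'n) set \<Rightarrow> int) \<Rightarrow> ((real^'n) set \<Rightarrow> int) \<Rightarrow> bool" where
  "cycle_eq k W W' \<longleftrightarrow> (\<exists>L. finite L \<and> (\<forall>P\<in>L. polyhedron P \<and> aff_dim P < int k) \<and>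
      (\<forall>x. x \<notin> \<Union>L \<longrightarrow> weight_fn k W x = weight_fn k W' x))"

end

theory Submission
  imports Defs
begin

text \<open>
  Both sides are pushforwards of the weights of \<open>\<Sigma>\<close>, restricted to the cells P with
  \<open>\<tau> \<subseteq> \<rho>(P)\<close> and \<open>dim \<rho>(P) = k\<close>: the left one along \<open>P \<mapsto> \<rho>(\<pi>\<^sub>\<tau>(P))\<close>, the right one along
  \<open>P \<mapsto> \<pi>\<^sub>\<tau>(\<rho>(P))\<close> (using \<open>\<rho>(\<rho>(P)) = \<rho>(P)\<close>). Write P as an intersection of halfspaces
  \<open>a \<bullet> x \<le> b\<close>; since \<open>\<tau> \<subseteq> \<rho>(P)\<close>, every a satisfies \<open>a \<bullet> u \<le> 0\<close> on \<open>\<tau>\<close>. Adding \<open>span \<tau>\<close>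
  keeps exactly the constraints with \<open>a \<bottom> \<tau>\<close>, and \<open>\<rho>\<close> replaces every b by 0, so the two
  operations commute; and adding \<open>span \<tau> \<subseteq> span \<rho>(P)\<close> does not change \<open>dim \<rho>(P)\<close>. Hence the
  two weight functions agree exactly, not only up to refinement.
\<close>

definition halfspace_inter :: "('a::real_inner \<times> real) set \<Rightarrow> 'a set" where
  "halfspace_inter F = {x. \<forall>(a,b)\<in>F. a \<bullet> x \<le> b}"

lemma rat_polyhedron_halfspace_inter:
  assumes "rat_polyhedron P"
  obtains F where "finite F" "P = halfspace_inter F"
  using assms unfolding rat_polyhedron_def halfspace_inter_def by blast

lemma rec_cone_halfspace_inter:
  assumes "halfspace_inter F \<noteq> {}"
  shows "rec_cone (halfspace_inter F) = halfspace_inter ((\<lambda>(a,b). (a, 0)) ` F)"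
proof
  show "halfspace_inter ((\<lambda>(a,b). (a, 0)) ` F) \<subseteq> rec_cone (halfspace_inter F)"
  proof (clarsimp simp: rec_cone_def)
    fix d x and t :: real
    assume d: "d \<in> halfspace_inter ((\<lambda>(a,b). (a, 0)) ` F)"
      and x: "x \<in> halfspace_inter F" and t: "0 \<le> t"
    have "a \<bullet> (x + t *\<^sub>R d) \<le> b" if "(a,b) \<in> F" for a b
    proof -
      have "a \<bullet> d \<le> 0" "a \<bullet> x \<le> b"
        using d x that by (force simp: halfspace_inter_def)+
      moreover have "t * (a \<bullet> d) \<le> 0" using t \<open>a \<bullet> d \<le> 0\<close> by (rule mult_nonneg_nonpos)
      ultimately show ?thesis by (simp add: inner_add_right)
    qed
    then show "x + t *\<^sub>R d \<in> halfspace_inter F" by (auto simp: halfspace_inter_def)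
  qed
next
  show "rec_cone (halfspace_inter F) \<subseteq> halfspace_inter ((\<lambda>(a,b). (a, 0)) ` F)"
  proof (clarsimp simp: halfspace_inter_def[of "_ ` F"])
    fix d a b
    assume d: "d \<in> rec_cone (halfspace_inter F)" and ab: "(a,b) \<in> F"
    obtain x where x: "x \<in> halfspace_inter F" using assms by auto
    show "a \<bullet> d \<le> 0"
    proof (rule ccontr)
      assume "\<not> a \<bullet> d \<le> 0"
      then have pos: "a \<bullet> d > 0" by simp
      have xb: "a \<bullet> x \<le> b" using x ab by (auto simp: halfspace_inter_def)
      define t where "t = (b - a \<bullet> x) / (a \<bullet> d) + 1"
      have "t \<ge> 0" unfolding t_def using pos xb by (simp add: field_simps)
      then have "x + t *\<^sub>R d \<in> halfspace_inter F" using d x by (auto simp: rec_cone_def)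
      then have "a \<bullet> (x + t *\<^sub>R d) \<le> b" using ab by (auto simp: halfspace_inter_def)
      moreover have "a \<bullet> (x + t *\<^sub>R d) = b + a \<bullet> d"
        unfolding t_def using pos by (simp add: inner_add_right field_simps)
      ultimately show False using pos by linarith
    qed
  qed
qed

lemma halfspace_inter_add_line:
  assumes fin: "finite F" and u: "\<forall>(a,b)\<in>F. a \<bullet> u \<le> 0"
  shows "{x + s *\<^sub>R u | x s. x \<in> halfspace_inter F} = halfspace_inter {(a,b)\<in>F. a \<bullet> u = 0}"
proof
  show "{x + s *\<^sub>R u | x s. x \<in> halfspace_inter F} \<subseteq> halfspace_inter {(a,b)\<in>F. a \<bullet> u = 0}"
    by (auto simp: halfspace_inter_def inner_add_right)
next
  show "halfspace_inter {(a,b)\<in>F. a \<bullet> u = 0} \<subseteq> {x + s *\<^sub>R u | x s. x \<in> halfspace_inter F}"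
  proof
    fix y assume y: "y \<in> halfspace_inter {(a,b)\<in>F. a \<bullet> u = 0}"
    define N where "N = {(a,b)\<in>F. a \<bullet> u < 0}"
    have "finite N" using fin unfolding N_def by (auto intro: finite_subset)
    \<comment> \<open>going back along u by s satisfies every constraint with a \<bullet> u < 0 at once\<close>
    define s where "s = - (\<Sum>(a,b)\<in>N. \<bar>b - a \<bullet> y\<bar> / \<bar>a \<bullet> u\<bar>)"
    have "a \<bullet> (y - s *\<^sub>R u) \<le> b" if ab: "(a,b) \<in> F" for a b
    proof (cases "a \<bullet> u = 0")
      case True
      then show ?thesis using y ab by (auto simp: halfspace_inter_def inner_diff_right)
    next
      case False
      with u ab have neg: "a \<bullet> u < 0" by fastforce
      then have "(a,b) \<in> N" using ab by (auto simp: N_def)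
      then have "\<bar>b - a \<bullet> y\<bar> / \<bar>a \<bullet> u\<bar> \<le> - s"
        using member_le_sum[of "(a,b)" N "\<lambda>(a,b). \<bar>b - a \<bullet> y\<bar> / \<bar>a \<bullet> u\<bar>"] \<open>finite N\<close>
        by (auto simp: s_def)
      then have "\<bar>b - a \<bullet> y\<bar> \<le> - s * \<bar>a \<bullet> u\<bar>"
        using neg by (simp add: neg_le_divide_eq mult.commute)
      then have "a \<bullet> y - b \<le> s * (a \<bullet> u)" using neg by simp
      then show ?thesis by (simp add: inner_diff_right)
    qed
    then have "y - s *\<^sub>R u \<in> halfspace_inter F" by (auto simp: halfspace_inter_def)
    moreover have "y = (y - s *\<^sub>R u) + s *\<^sub>R u" by simp
    ultimately show "y \<in> {x + s *\<^sub>R u | x s. x \<in> halfspace_inter F}" by blast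
  qed
qed

lemma lift_empty: "lift {} X = X"
  by (force simp: lift_def)

lemma lift_insert: "lift (insert u B) X = {y + s *\<^sub>R u | y s. y \<in> lift B X}"
proof (intro set_eqI iffI)
  fix z assume "z \<in> lift (insert u B) X"
  then obtain x v where z: "z = x + v" "x \<in> X" "v \<in> span (insert u B)"
    unfolding lift_def by blast
  then obtain s where "v - s *\<^sub>R u \<in> span B" by (auto simp: span_insert)
  moreover have "z = (x + (v - s *\<^sub>R u)) + s *\<^sub>R u" using z by simp
  ultimately show "z \<in> {y + s *\<^sub>R u | y s. y \<in> lift B X}"
    using z unfolding lift_def by blast
next
  fix z assume "z \<in> {y + s *\<^sub>R u | y s. y \<in> lift B X}"
  then obtain x v s where z: "z = x + v + s *\<^sub>R u" "x \<in> X" "v \<in> span B"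
    unfolding lift_def by blast
  have "v + s *\<^sub>R u \<in> span (insert u B)"
    using z(3) by (simp add: span_insert) (metis add_diff_cancel)
  moreover have "z = x + (v + s *\<^sub>R u)" using z by simp
  ultimately show "z \<in> lift (insert u B) X"
    using z unfolding lift_def by blast
qed

lemma lift_halfspace_inter:
  assumes "finite B" "finite F" "\<forall>(a,b)\<in>F. \<forall>u\<in>B. a \<bullet> u \<le> 0"
  shows "lift B (halfspace_inter F) = halfspace_inter {(a,b)\<in>F. \<forall>u\<in>B. a \<bullet> u = 0}"
  using assms
proof (induction B rule: finite_induct)
  case empty
  then show ?case by (simp add: lift_empty)
next
  case (insert u B)
  let ?F' = "{(a,b)\<in>F. \<forall>u\<in>B. a \<bullet> u = 0}"
  have "lift B (halfspace_inter F) = halfspace_inter ?F'"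
    using insert.prems by (intro insert.IH) auto
  then have "lift (insert u B) (halfspace_inter F) = {y + s *\<^sub>R u | y s. y \<in> halfspace_inter ?F'}"
    by (simp add: lift_insert)
  also have "\<dots> = halfspace_inter {(a,b)\<in>?F'. a \<bullet> u = 0}"
    using insert.prems by (intro halfspace_inter_add_line) (auto intro: finite_subset)
  also have "{(a,b)\<in>?F'. a \<bullet> u = 0} = {(a,b)\<in>F. \<forall>w\<in>insert u B. a \<bullet> w = 0}"
    by auto
  finally show ?case .
qed

lemma rec_cone_lift:
  assumes P: "rat_polyhedron P" "P \<noteq> {}" and \<tau>: "\<tau> \<subseteq> rec_cone P"
  shows "rec_cone (lift \<tau> P) = lift \<tau> (rec_cone P)"
proof -
  obtain F where F: "finite F" "P = halfspace_inter F"
    using P(1) by (rule rat_polyhedron_halfspace_inter)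
  obtain B where B: "B \<subseteq> \<tau>" "independent B" "\<tau> \<subseteq> span B"
    by (rule maximal_independent_subset)
  have "finite B" using B(2) by (rule finiteI_independent)
  have "span \<tau> = span B" using B span_superset by (auto simp: span_eq)
  then have lift_B: "lift \<tau> X = lift B X" for X by (simp add: lift_def)
  define hom where "hom = (\<lambda>(a::real^'a, b::real). (a, 0::real))"
  have rec_P: "rec_cone P = halfspace_inter (hom ` F)"
    using P(2) unfolding F(2) hom_def by (rule rec_cone_halfspace_inter)
  have BF: "\<forall>(a,b)\<in>F. \<forall>u\<in>B. a \<bullet> u \<le> 0"
    using B(1) \<tau> unfolding rec_P hom_def halfspace_inter_def by fastforce
  then have BF0: "\<forall>(a,b)\<in>hom ` F. \<forall>u\<in>B. a \<bullet> u \<le> 0"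
    unfolding hom_def by fastforce
  let ?F' = "{(a,b)\<in>F. \<forall>u\<in>B. a \<bullet> u = 0}"
  have lift_P: "lift B P = halfspace_inter ?F'"
    unfolding F(2) using \<open>finite B\<close> F(1) BF by (rule lift_halfspace_inter)
  have "P \<subseteq> lift B P" unfolding lift_def by (force intro: span_zero)
  then have "rec_cone (lift B P) = halfspace_inter (hom ` ?F')"
    using P(2) unfolding lift_P hom_def by (intro rec_cone_halfspace_inter) auto
  also have "hom ` ?F' = {(a,b)\<in>hom ` F. \<forall>u\<in>B. a \<bullet> u = 0}"
    unfolding hom_def by force
  also have "halfspace_inter \<dots> = lift B (rec_cone P)"
    unfolding rec_P using \<open>finite B\<close> _ BF0
    by (rule lift_halfspace_inter[symmetric]) (use F(1) in simp)
  finally show ?thesis by (simp add: lift_B)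
qed

lemma zero_in_rec_cone: "0 \<in> rec_cone P"
  by (simp add: rec_cone_def)

lemma rec_cone_add:
  assumes d: "d \<in> rec_cone P" and e: "e \<in> rec_cone P"
  shows "d + e \<in> rec_cone P"
  unfolding rec_cone_def
proof (intro CollectI ballI allI impI)
  fix x and t :: real assume "x \<in> P" "0 \<le> t"
  then have "(x + t *\<^sub>R d) + t *\<^sub>R e \<in> P"
    using d e unfolding rec_cone_def by blast
  then show "x + t *\<^sub>R (d + e) \<in> P" by (simp add: algebra_simps)
qed

lemma rec_cone_scaleR:
  assumes "d \<in> rec_cone P" "0 \<le> c"
  shows "c *\<^sub>R d \<in> rec_cone P"
  using assms by (simp add: rec_cone_def)

lemma rec_cone_rec_cone: "rec_cone (rec_cone P) = rec_cone P"
proof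
  show "rec_cone (rec_cone P) \<subseteq> rec_cone P"
  proof
    fix d assume "d \<in> rec_cone (rec_cone P)"
    then have "\<forall>x\<in>rec_cone P. \<forall>t\<ge>0. x + t *\<^sub>R d \<in> rec_cone P"
      unfolding rec_cone_def[of "rec_cone P"] by blast
    then have "0 + 1 *\<^sub>R d \<in> rec_cone P"
      using zero_in_rec_cone zero_le_one by blast
    then show "d \<in> rec_cone P" by simp
  qed
  show "rec_cone P \<subseteq> rec_cone (rec_cone P)"
  proof
    fix d assume d: "d \<in> rec_cone P"
    show "d \<in> rec_cone (rec_cone P)"
      unfolding rec_cone_def[of "rec_cone P"]
      using d by (intro CollectI ballI allI impI rec_cone_add rec_cone_scaleR)
  qed
qed

lemma aff_dim_lift:
  assumes "0 \<in> R" "\<tau> \<subseteq> span R"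
  shows "aff_dim (lift \<tau> R) = aff_dim R"
proof -
  have "lift \<tau> R \<subseteq> span R"
  proof
    fix z assume "z \<in> lift \<tau> R"
    then obtain x v where "z = x + v" "x \<in> R" "v \<in> span \<tau>" unfolding lift_def by blast
    then show "z \<in> span R"
      using span_mono[OF assms(2)] by (auto simp: span_span intro: span_add span_base)
  qed
  moreover have "R \<subseteq> lift \<tau> R" unfolding lift_def by (force intro: span_zero)
  ultimately have "span (lift \<tau> R) = span R"
    by (metis span_mono span_span subset_antisym)
  moreover have "0 \<in> lift \<tau> R" using \<open>R \<subseteq> lift \<tau> R\<close> assms(1) by blast
  ultimately show ?thesis
    using assms(1) by (metis aff_dim_zero dim_span hull_inc)
qed

definition pushforward :: "('a \<Rightarrow> 'b) \<Rightarrow> ('a \<Rightarrow> 'c::comm_monoid_add) \<Rightarrow> 'b \<Rightarrow> 'c" where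
  "pushforward f W y = (\<Sum>x | W x \<noteq> 0 \<and> f x = y. W x)"

lemma pushforward_pushforward:
  assumes fin: "finite {x. W x \<noteq> 0}"
  shows "pushforward g (pushforward f W) = pushforward (g \<circ> f) W"
proof
  fix z
  define S where "S = {x. W x \<noteq> 0 \<and> g (f x) = z}"
  have "finite S" using fin unfolding S_def by (auto intro: finite_subset)
  have fibre: "{x. W x \<noteq> 0 \<and> f x = y} = {x \<in> S. f x = y}" if "g y = z" for y
    using that unfolding S_def by auto
  have support: "{y. pushforward f W y \<noteq> 0 \<and> g y = z} \<subseteq> f ` S"
  proof
    fix y assume y: "y \<in> {y. pushforward f W y \<noteq> 0 \<and> g y = z}"
    have "{x. W x \<noteq> 0 \<and> f x = y} \<noteq> {}"
    proof
      assume "{x. W x \<noteq> 0 \<and> f x = y} = {}"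
      then have "pushforward f W y = 0" unfolding pushforward_def by (simp only: sum.empty)
      with y show False by simp
    qed
    then obtain x where "W x \<noteq> 0" "f x = y" by blast
    with y show "y \<in> f ` S" unfolding S_def by auto
  qed
  have "pushforward g (pushforward f W) z = (\<Sum>y\<in>f ` S. pushforward f W y)"
    unfolding pushforward_def[of g]
    by (rule sum.mono_neutral_left[OF _ support]) (use \<open>finite S\<close> S_def in auto)
  also have "\<dots> = (\<Sum>y\<in>f ` S. \<Sum>x\<in>{x \<in> S. f x = y}. W x)"
    by (rule sum.cong) (auto simp: pushforward_def fibre S_def)
  also have "\<dots> = sum W S"
    using \<open>finite S\<close> by (intro sum.group) auto
  finally show "pushforward g (pushforward f W) z = pushforward (g \<circ> f) W z"
    by (simp add: pushforward_def S_def)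
qed

lemma pushforward_restrict:
  "(\<lambda>y. if P y then pushforward f W y else 0) = pushforward f (\<lambda>x. if P (f x) then W x else 0)"
  by (auto simp: pushforward_def intro!: sum.cong)

lemma pushforward_cong:
  "(\<And>x. W x \<noteq> 0 \<Longrightarrow> f x = g x) \<Longrightarrow> pushforward f W = pushforward g W"
  unfolding pushforward_def by (intro ext sum.cong) auto

lemma orbit_part_eq_pushforward:
  "orbit_part \<tau> W = pushforward (lift \<tau>) (\<lambda>P. if \<tau> \<subseteq> rec_cone P then W P else 0)"
  unfolding orbit_part_def pushforward_def by (intro ext sum.cong) (auto split: if_splits)

lemma rec_part_eq_pushforward:
  "rec_part k W = (\<lambda>C. if aff_dim C = int k then pushforward rec_cone W C else 0)"
  unfolding rec_part_def pushforward_def by (auto intro: sum.cong)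

lemma rec_part_orbit_part_commute:
  assumes fin: "finite {P. W P \<noteq> 0}"
    and cells: "\<And>P. W P \<noteq> 0 \<Longrightarrow> rat_polyhedron P \<and> P \<noteq> {}"
  shows "rec_part k (orbit_part \<tau> W) = orbit_part \<tau> (rec_part k W)"
proof -
  have fin_restrict: "finite {P. (if Q P then W P else 0) \<noteq> 0}" for Q
    by (rule finite_subset[OF _ fin]) auto
  have cell: "rec_cone (lift \<tau> P) = lift \<tau> (rec_cone P)"
    "aff_dim (lift \<tau> (rec_cone P)) = aff_dim (rec_cone P)"
    if "W P \<noteq> 0" "\<tau> \<subseteq> rec_cone P" for P
    using cells[OF that(1)] that(2) order_trans[OF that(2) span_superset]
    by (simp_all add: rec_cone_lift aff_dim_lift zero_in_rec_cone)
  define V where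
    "V P = (if \<tau> \<subseteq> rec_cone P \<and> aff_dim (rec_cone P) = int k then W P else 0)" for P
  have "rec_part k (orbit_part \<tau> W) = (\<lambda>C. if aff_dim C = int k
          then pushforward (rec_cone \<circ> lift \<tau>) (\<lambda>P. if \<tau> \<subseteq> rec_cone P then W P else 0) C
          else 0)"
    unfolding rec_part_eq_pushforward orbit_part_eq_pushforward
    by (subst pushforward_pushforward[OF fin_restrict]) (rule refl)
  also have "\<dots> = pushforward (rec_cone \<circ> lift \<tau>) (\<lambda>P. if aff_dim (rec_cone (lift \<tau> P)) = int k
          then (if \<tau> \<subseteq> rec_cone P then W P else 0) else 0)"
    by (simp add: pushforward_restrict)
  also have "(\<lambda>P. if aff_dim (rec_cone (lift \<tau> P)) = int k
          then (if \<tau> \<subseteq> rec_cone P then W P else 0) else 0) = V"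
  proof
    fix P
    show "(if aff_dim (rec_cone (lift \<tau> P)) = int k
          then (if \<tau> \<subseteq> rec_cone P then W P else 0) else 0) = V P"
      by (cases "W P \<noteq> 0 \<and> \<tau> \<subseteq> rec_cone P") (auto simp: V_def cell)
  qed
  also have "pushforward (rec_cone \<circ> lift \<tau>) V = pushforward (lift \<tau> \<circ> rec_cone) V"
    using cell(1) unfolding V_def by (intro pushforward_cong) (auto split: if_splits)
  also have "\<dots> = pushforward (lift \<tau>) (pushforward rec_cone V)"
    unfolding V_def by (rule pushforward_pushforward[OF fin_restrict, symmetric])
  also have "pushforward rec_cone V
      = (\<lambda>C. if \<tau> \<subseteq> rec_cone C \<and> aff_dim C = int k then pushforward rec_cone W C else 0)"
    unfolding pushforward_restrict V_def by (simp add: rec_cone_rec_cone)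
  also have "pushforward (lift \<tau>) \<dots> = orbit_part \<tau> (rec_part k W)"
    unfolding orbit_part_eq_pushforward rec_part_eq_pushforward
    by (intro arg_cong[where f = "pushforward (lift \<tau>)"] ext) simp
  finally show ?thesis .
qed

lemma cycle_eq_refl: "cycle_eq k W W"
  unfolding cycle_eq_def by (intro exI[of _ "{}"]) simp

theorem lemma3:
  fixes \<Delta> S :: "(real^'n) set set" and m :: "(real^'n) set \<Rightarrow> int"
    and k :: nat and \<tau> :: "(real^'n) set"
  assumes "complete_unimodular_fan \<Delta>"
    and "tropical_cycle S m k"
    and "compatible \<Delta> S"
    and "\<tau> \<in> \<Delta>"
  shows "cycle_eq k (rec_part k (orbit_part \<tau> (cycle_wt S m k)))
                    (orbit_part \<tau> (rec_part k (cycle_wt S m k)))"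
proof -
  have S: "polyhedral_complex S" using assms(2) by (simp add: tropical_cycle_def)
  have support: "{P. cycle_wt S m k P \<noteq> 0} \<subseteq> S"
    by (auto simp: cycle_wt_def split: if_splits)
  have "finite {P. cycle_wt S m k P \<noteq> 0}"
    using S support by (auto simp: polyhedral_complex_def intro: finite_subset)
  moreover have "rat_polyhedron P \<and> P \<noteq> {}" if "cycle_wt S m k P \<noteq> 0" for P
    using S support that by (auto simp: polyhedral_complex_def)
  ultimately show ?thesis by (simp add: rec_part_orbit_part_commute cycle_eq_refl)
qed

end
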